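(* Let $\lambda,\mu\in\mathbb{C}^*$, $\alpha,\beta\in\mathbb{C}$ and $t,t'\in\{1,-1\}$, and let $\mathcal{M}_t(\lambda,\alpha)$ denote the $\mathcal{T}$-modules described in the context. Then: (i) $\Pi(\mathcal{M}_t(\lambda,\alpha))\not\cong\mathcal{M}_{t'}(\mu',\beta')$ for any $\mu'\in\mathbb{C}^*$, $\beta'\in\mathbb{C}$; (ii) $\mathcal{M}_t(\lambda,\alpha)\cong\mathcal{M}_{t'}(\mu,\beta)$ if and only if $\lambda=\mu$, $\alpha=\beta$ and $t=t'$.
   Context: The twisted $N=2$ superconformal algebra $\mathcal{T}$ is the Lie superalgebra over $\mathbb{C}$ with basis $\{L_m, I_r, G_p\mid m\in\mathbb{Z}, r\in\frac12+\mathbb{Z}, p\in\frac12\mathbb{Z}\}$, even part spanned by the $L_m,I_r$, odd part spanned by the $G_p$, and with the only nonzero brackets $[L_m,L_n]=(m-n)L_{m+n}$, $[L_m,I_r]=-rI_{m+r}$, $[L_m,G_p]=(\frac m2-p)G_{m+p}$, $[I_r,G_p]=G_{r+p}$, and $[G_p,G_q]=(-1)^{2p}2L_{p+q}$ if $p+q\in\mathbb{Z}$, $[G_p,G_q]=(-1)^{2p+1}(p-q)I_{p+q}$ if $p+q\in\frac12+\mathbb{Z}$. Modules are $\mathbb{Z}_2$-graded (super)modules and isomorphisms preserve parity; $\Pi$ is the parity-change functor. For $\lambda\in\mathbb{C}^*,\alpha\in\mathbb{C},t=\pm1$, $\mathcal{M}_t(\lambda,\alpha)$ is the space $\mathbb{C}[\partial^2]\oplus\partial\mathbb{C}[\partial^2]$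 ($\partial$ a formal variable) with even part $\mathbb{C}[\partial^2]$, odd part $\partial\mathbb{C}[\partial^2]$, and action ($m\in\mathbb{Z}$, $r\in\frac12+\mathbb{Z}$, $p\in\frac12\mathbb{Z}$): $L_mf(\partial^2)=\lambda^m(\partial^2+m\alpha)f(\partial^2+m)$, $L_m\partial f(\partial^2)=\lambda^m(\partial^2+m(\alpha+\frac12))\partial f(\partial^2+m)$, $I_rf(\partial^2)=-2t^{2r}\lambda^{r}\alpha f(\partial^2+r)$, $I_r\partial f(\partial^2)=t^{2r}\lambda^{r}(1-2\alpha)\partial f(\partial^2+r)$, $G_pf(\partial^2)=t^{2p}\lambda^p\partial f(\partial^2+p)$, $G_p\partial f(\partial^2)=(-t)^{2p}\lambda^p(\partial^2+2p\alpha)f(\partial^2+p)$. For $p\in\frac12\mathbb{Z}$, $\lambda^p$ means $(\lambda^{1/2})^{2p}$ for a fixed square root $\lambda^{1/2}$ (likewise for $\mu$). *)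

theory Defs
  imports Complex_Main "HOL-Computational_Algebra.Polynomial"
begin

text \<open>Basis of the twisted N=2 superconformal algebra T.
  TL m   is L_m   (m integer),
  TI k   is I_(k + 1/2)  (k integer, so r = k + 1/2 ranges over 1/2 + Z),
  TG n   is G_(n/2)  (n integer, so p = n/2 ranges over (1/2) Z).\<close>
datatype Tbasis = TL int | TI int | TG int

text \<open>An element of M_t(lambda,alpha) = C[d^2] + d C[d^2] is represented as a pair (f, g)
  of polynomials, standing for f(d^2) + d g(d^2); the first component is the even part,
  the second the odd part.\<close>
type_synonym selt = "complex poly \<times> complex poly"

definition shift :: "complex \<Rightarrow> complex poly \<Rightarrow> complex poly" where
  "shift c f = pcompose f [:c, 1:]"

text \<open>lambda^p = (lambda^(1/2))^(2p) with the fixed square root csqrt lambda.\<close>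
definition hpow :: "complex \<Rightarrow> int \<Rightarrow> complex" where
  "hpow lam n = csqrt lam powi n"

definition Mact :: "complex \<Rightarrow> complex \<Rightarrow> complex \<Rightarrow> Tbasis \<Rightarrow> selt \<Rightarrow> selt" where
  "Mact t lam al x v = (case v of (f, g) \<Rightarrow> (case x of
     TL m \<Rightarrow> (smult (lam powi m) ([:of_int m * al, 1:] * shift (of_int m) f),
              smult (lam powi m) ([:of_int m * (al + 1/2), 1:] * shift (of_int m) g))
   | TI k \<Rightarrow> (smult (-2 * t powi (2*k+1) * hpow lam (2*k+1) * al) (shift (of_int k + 1/2) f),
              smult (t powi (2*k+1) * hpow lam (2*k+1) * (1 - 2*al)) (shift (of_int k + 1/2) g))
   | TG n \<Rightarrow> (smult ((-t) powi n * hpow lam n) ([:of_int n * al, 1:] * shift (of_int n / 2) g),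
              smult (t powi n * hpow lam n) (shift (of_int n / 2) f))))"

text \<open>Parity change functor: the even part of Pi(M) is the odd part of M and vice versa
  (action unchanged; the sign convention does not affect isomorphism classes).\<close>
definition Pi_act :: "(Tbasis \<Rightarrow> selt \<Rightarrow> selt) \<Rightarrow> Tbasis \<Rightarrow> selt \<Rightarrow> selt" where
  "Pi_act act x v = prod.swap (act x (prod.swap v))"

definition smod_iso :: "(Tbasis \<Rightarrow> selt \<Rightarrow> selt) \<Rightarrow> (Tbasis \<Rightarrow> selt \<Rightarrow> selt) \<Rightarrow> bool" where
  "smod_iso act1 act2 \<longleftrightarrow> (\<exists>\<phi> :: selt \<Rightarrow> selt.
     bij \<phi> \<and>
     (\<forall>f g f' g'. \<phi> (f + f', g + g') = (fst (\<phi> (f, g)) + fst (\<phi> (f', g')), snd (\<phi> (f, g)) + snd (\<phi> (f', g')))) \<and>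
     (\<forall>c f g. \<phi> (smult c f, smult c g) = (smult c (fst (\<phi> (f, g))), smult c (snd (\<phi> (f, g))))) \<and>
     (\<forall>f. snd (\<phi> (f, 0)) = 0) \<and> (\<forall>g. fst (\<phi> (0, g)) = 0) \<and>
     (\<forall>x v. \<phi> (act1 x v) = act2 x (\<phi> v)))"

end

theory Submission
  imports Defs
begin

text \<open>Both \<open>L\<^sub>0\<close> actions are multiplication by \<open>\<partial>\<^sup>2\<close> on each graded piece, so a
  parity-preserving isomorphism is \<open>\<complex>[\<partial>\<^sup>2]\<close>-linear on the even and on the odd part. A
  \<open>\<complex>[x]\<close>-linear bijection of \<open>\<complex>[x]\<close> is multiplication by a unit, i.e. by a nonzero
  constant; hence every isomorphism is a diagonal rescaling by constants \<open>c, d \<noteq> 0\<close>.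
  Applying it to \<open>L\<^sub>1\<close> on \<open>(1, 1)\<close> recovers \<open>\<lambda>\<close> and \<open>\<alpha>\<close> from the even part and
  \<open>\<alpha> + 1/2\<close> from the odd part; parity change swaps these two roles, which is
  incompatible with \<open>\<alpha> + 1/2 \<noteq> \<alpha>\<close>. Finally \<open>I\<^bsub>1/2\<^esub>\<close> on \<open>(1, 1)\<close> gives \<open>t \<alpha>\<close> and
  \<open>t (1 - 2\<alpha>)\<close>, which cannot both vanish, so \<open>t\<close> is determined as well.\<close>

lemma X_commuting_linear_map_eq_mult:
  fixes A :: "'a::comm_semiring_1 poly \<Rightarrow> 'a poly"
  assumes add: "\<And>f g. A (f + g) = A f + A g"
    and smult: "\<And>c f. A (smult c f) = smult c (A f)"
    and X: "\<And>f. A ([:0, 1:] * f) = [:0, 1:] * A f"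
  shows "A f = f * A 1"
proof (induction f)
  case (pCons c p)
  have "A (pCons c p) = A (smult c 1 + [:0, 1:] * p)"
    by (simp add: mult_pCons_left)
  also have "\<dots> = smult c (A 1) + [:0, 1:] * (p * A 1)"
    by (simp only: add smult X pCons.IH)
  also have "\<dots> = pCons c p * A 1"
    by (simp add: mult_pCons_left)
  finally show ?case .
qed (use smult[of 0 0] in simp)

lemma surj_X_commuting_linear_map_eq_smult:
  fixes A :: "'a::field poly \<Rightarrow> 'a poly"
  assumes add: "\<And>f g. A (f + g) = A f + A g"
    and smult: "\<And>c f. A (smult c f) = smult c (A f)"
    and X: "\<And>f. A ([:0, 1:] * f) = [:0, 1:] * A f"
    and "surj A"
  obtains c where "c \<noteq> 0" and "\<And>f. A f = smult c f"
proof -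
  have mult: "A f = f * A 1" for f
    using add smult X by (rule X_commuting_linear_map_eq_mult)
  obtain f where "A f = 1"
    using \<open>surj A\<close> by (metis surjD)
  then have "f * A 1 = 1"
    by (simp add: mult[of f, symmetric])
  then have "A 1 dvd 1"
    by (metis dvd_triv_right)
  then obtain c where "A 1 = monom c 0" and "c \<noteq> 0"
    by (rule is_unit_polyE')
  moreover have "A g = smult c g" for g
    using mult[of g] \<open>A 1 = monom c 0\<close> by (simp add: monom_0)
  ultimately show thesis
    using that by blast
qed

lemma smod_iso_diagonal:
  assumes iso: "smod_iso act1 act2"
    and act1_L0: "act1 (TL 0) = map_prod ((*) [:0, 1:]) ((*) [:0, 1:])"
    and act2_L0: "act2 (TL 0) = map_prod ((*) [:0, 1:]) ((*) [:0, 1:])"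
  obtains c d where "c \<noteq> 0" and "d \<noteq> 0"
    and "\<And>x v. map_prod (smult c) (smult d) (act1 x v)
                = act2 x (map_prod (smult c) (smult d) v)"
proof -
  obtain \<phi> :: "selt \<Rightarrow> selt" where "surj \<phi>"
    and add: "\<And>f g f' g'. \<phi> (f + f', g + g')
                = (fst (\<phi> (f, g)) + fst (\<phi> (f', g')), snd (\<phi> (f, g)) + snd (\<phi> (f', g')))"
    and smult: "\<And>c f g. \<phi> (smult c f, smult c g)
                = (smult c (fst (\<phi> (f, g))), smult c (snd (\<phi> (f, g))))"
    and even: "\<And>f. snd (\<phi> (f, 0)) = 0" and odd: "\<And>g. fst (\<phi> (0, g)) = 0"
    and intertwines: "\<And>x v. \<phi> (act1 x v) = act2 x (\<phi> v)"
    using iso unfolding smod_iso_def by (metis bij_is_surj)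
  define A where "A f = fst (\<phi> (f, 0))" for f
  define B where "B g = snd (\<phi> (0, g))" for g
  have \<phi>_split: "\<phi> (f, g) = (A f, B g)" for f g
    using add[of f 0 0 g] even odd by (simp add: A_def B_def)
  have X: "\<phi> ([:0, 1:] * f, [:0, 1:] * g) = ([:0, 1:] * A f, [:0, 1:] * B g)" for f g
    using intertwines[of "TL 0" "(f, g)"] by (simp add: act1_L0 act2_L0 \<phi>_split)
  have "surj A"
    unfolding surj_def
  proof
    fix p
    from \<open>surj \<phi>\<close> obtain v where "(p, 0) = \<phi> v"
      by (rule surjE)
    then show "\<exists>f. p = A f"
      by (cases v) (auto simp: \<phi>_split)
  qed
  obtain c where "c \<noteq> 0" and A: "\<And>f. A f = smult c f"
    by (rule surj_X_commuting_linear_map_eq_smult[OF _ _ _ \<open>surj A\<close>])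
      (use add smult X in \<open>simp_all add: \<phi>_split\<close>)
  have "surj B"
    unfolding surj_def
  proof
    fix p
    from \<open>surj \<phi>\<close> obtain v where "(0, p) = \<phi> v"
      by (rule surjE)
    then show "\<exists>f. p = B f"
      by (cases v) (auto simp: \<phi>_split)
  qed
  obtain d where "d \<noteq> 0" and B: "\<And>g. B g = smult d g"
    by (rule surj_X_commuting_linear_map_eq_smult[OF _ _ _ \<open>surj B\<close>])
      (use add smult X in \<open>simp_all add: \<phi>_split\<close>)
  have "\<phi> = map_prod (smult c) (smult d)"
    by (simp add: fun_eq_iff \<phi>_split A B)
  with intertwines show thesis
    using that \<open>c \<noteq> 0\<close> \<open>d \<noteq> 0\<close> by simp
qed

lemma smod_iso_refl: "smod_iso act act"
  unfolding smod_iso_def by (intro exI[of _ id]) simp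

lemma Mact_TL0: "Mact t lam al (TL 0) = map_prod ((*) [:0, 1:]) ((*) [:0, 1:])"
  by (simp add: fun_eq_iff Mact_def shift_def)

lemma Pi_act_Mact_TL0: "Pi_act (Mact t lam al) (TL 0) = map_prod ((*) [:0, 1:]) ((*) [:0, 1:])"
  by (simp add: fun_eq_iff Pi_act_def Mact_def shift_def)

lemma Mact_TL1_const:
  "Mact t lam al (TL 1) ([:a:], [:b:])
     = ([:lam * al * a, lam * a:], [:lam * (al + 1/2) * b, lam * b:])"
  by (simp add: Mact_def shift_def)

lemma Mact_TI0_const:
  "Mact t lam al (TI 0) ([:a:], [:b:])
     = ([:-2 * t * csqrt lam * al * a:], [:t * csqrt lam * (1 - 2 * al) * b:])"
  by (simp add: Mact_def shift_def hpow_def)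

lemma Pi_act_Mact_not_iso:
  assumes "lam \<noteq> 0"
  shows "\<not> smod_iso (Pi_act (Mact t lam al)) (Mact t' mu be)"
proof
  assume "smod_iso (Pi_act (Mact t lam al)) (Mact t' mu be)"
  then obtain c d where "c \<noteq> 0" "d \<noteq> 0"
    and "map_prod (smult c) (smult d) (Pi_act (Mact t lam al) (TL 1) ([:1:], [:1:]))
         = Mact t' mu be (TL 1) (map_prod (smult c) (smult d) ([:1:], [:1:]))"
    by (rule smod_iso_diagonal) (simp_all add: Pi_act_Mact_TL0 Mact_TL0)
  then have "lam = mu" "lam * (al + 1/2) = lam * be" "lam * al = lam * (be + 1/2)"
    by (auto simp: Pi_act_def Mact_TL1_const)
  with \<open>lam \<noteq> 0\<close> have "al + 1/2 = be" "al = be + 1/2"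
    by simp_all
  then show False
    by simp
qed

lemma Mact_iso_iff:
  assumes "lam \<noteq> 0"
  shows "smod_iso (Mact t lam al) (Mact t' mu be) \<longleftrightarrow> lam = mu \<and> al = be \<and> t = t'"
proof
  assume "smod_iso (Mact t lam al) (Mact t' mu be)"
  then obtain c d where "c \<noteq> 0" "d \<noteq> 0"
    and intertwines: "\<And>x. map_prod (smult c) (smult d) (Mact t lam al x ([:1:], [:1:]))
         = Mact t' mu be x (map_prod (smult c) (smult d) ([:1:], [:1:]))"
    by (rule smod_iso_diagonal) (simp_all add: Mact_TL0)
  from intertwines[of "TL 1"] have "c * lam = mu * c" "c * (lam * al) = mu * be * c"
    by (simp_all add: Mact_TL1_const)
  with \<open>c \<noteq> 0\<close> \<open>lam \<noteq> 0\<close> have "lam = mu" "al = be"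
    by auto
  from intertwines[of "TI 0"]
  have "c * (t * csqrt lam * al) = t' * csqrt mu * be * c"
    and "d * (t * csqrt lam * (1 - 2 * al)) = t' * csqrt mu * (1 - 2 * be) * d"
    by (simp_all add: Mact_TI0_const)
  with \<open>c \<noteq> 0\<close> \<open>d \<noteq> 0\<close> \<open>lam \<noteq> 0\<close> \<open>lam = mu\<close> \<open>al = be\<close> have "t = t'"
    by (cases "al = 0") auto
  with \<open>lam = mu\<close> \<open>al = be\<close> show "lam = mu \<and> al = be \<and> t = t'"
    by simp
next
  assume "lam = mu \<and> al = be \<and> t = t'"
  then show "smod_iso (Mact t lam al) (Mact t' mu be)"
    by (simp add: smod_iso_refl)
qed

theorem theorem2p7:
  fixes lam mu al be t t' :: complex
  assumes "lam \<noteq> 0" and "mu \<noteq> 0"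
    and "t = 1 \<or> t = -1" and "t' = 1 \<or> t' = -1"
  shows "(\<forall>mu' be'. mu' \<noteq> 0 \<longrightarrow> \<not> smod_iso (Pi_act (Mact t lam al)) (Mact t' mu' be'))
       \<and> (smod_iso (Mact t lam al) (Mact t' mu be) \<longleftrightarrow> lam = mu \<and> al = be \<and> t = t')"
  using Pi_act_Mact_not_iso[OF \<open>lam \<noteq> 0\<close>] Mact_iso_iff[OF \<open>lam \<noteq> 0\<close>] by blast

end
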